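(* Let $k\ge 2$, let $G$ be any finite simple graph, and let $H$ be a finite simple graph admitting a closed neighborhood balanced $k$-coloring $c$ with $|c^{-1}(1)|=|c^{-1}(2)|=\dots=|c^{-1}(k)|$. Then the lexicographic product $G[H]$ admits a closed neighborhood balanced $k$-coloring.
   Context: For a vertex $v$, $N[v]=\{v\}\cup\{u : uv\in E\}$. A closed neighborhood balanced $k$-coloring of a graph is a map $c: V\to\{1,\dots,k\}$ such that for every vertex $v$ the numbers $|\{u\in N[v] : c(u)=i\}|$, $i=1,\dots,k$, are all equal. The lexicographic product $G[H]$ has vertex set $V(G)\times V(H)$, with $(g,h)$ adjacent to $(g',h')$ iff $gg'\in E(G)$, or $g=g'$ and $hh'\in E(H)$. *)

theory Defs
  imports Main
begin

definition simple_graph :: "'a set \<Rightarrow> ('a \<Rightarrow> 'a \<Rightarrow> bool) \<Rightarrow> bool" where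
  "simple_graph V E \<longleftrightarrow> finite V \<and> (\<forall>u v. E u v \<longrightarrow> u \<in> V \<and> v \<in> V)
     \<and> (\<forall>u v. E u v \<longrightarrow> E v u) \<and> (\<forall>v. \<not> E v v)"

definition closed_nbhd :: "'a set \<Rightarrow> ('a \<Rightarrow> 'a \<Rightarrow> bool) \<Rightarrow> 'a \<Rightarrow> 'a set" where
  "closed_nbhd V E v = {v} \<union> {u \<in> V. E u v}"

definition cnb_coloring :: "'a set \<Rightarrow> ('a \<Rightarrow> 'a \<Rightarrow> bool) \<Rightarrow> nat \<Rightarrow> ('a \<Rightarrow> nat) \<Rightarrow> bool" where
  "cnb_coloring V E k c \<longleftrightarrow> (\<forall>v\<in>V. c v \<in> {1..k}) \<and>
     (\<forall>v\<in>V. \<forall>i\<in>{1..k}. \<forall>j\<in>{1..k}.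
        card {u \<in> closed_nbhd V E v. c u = i} = card {u \<in> closed_nbhd V E v. c u = j})"

definition lex_vertices :: "'a set \<Rightarrow> 'b set \<Rightarrow> ('a \<times> 'b) set" where
  "lex_vertices VG VH = VG \<times> VH"

definition lex_edges :: "'a set \<Rightarrow> ('a \<Rightarrow> 'a \<Rightarrow> bool) \<Rightarrow> 'b set \<Rightarrow> ('b \<Rightarrow> 'b \<Rightarrow> bool)
    \<Rightarrow> ('a \<times> 'b) \<Rightarrow> ('a \<times> 'b) \<Rightarrow> bool" where
  "lex_edges VG EG VH EH x y \<longleftrightarrow> x \<in> VG \<times> VH \<and> y \<in> VG \<times> VH \<and>
     (EG (fst x) (fst y) \<or> (fst x = fst y \<and> EH (snd x) (snd y)))"

end

theory Submission
  imports Defs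
begin

text \<open>Colour each vertex (g, h) of G[H] by c h. The closed neighbourhood of (g, h) consists
  of the copy of N[h] in the fibre over g together with the whole fibres over the neighbours
  of g. Hence colour i occurs in it |{u \<in> N[h]. c u = i}| + deg g \<cdot> |{v \<in> V(H). c v = i}| times,
  and both summands are independent of i: the first because c is closed neighbourhood
  balanced, the second because the colour classes of c have equal size.\<close>

lemma closed_nbhd_lex_edges:
  assumes "g \<in> VG" and "h \<in> VH"
  shows "closed_nbhd (lex_vertices VG VH) (lex_edges VG EG VH EH) (g, h)
           = Pair g ` closed_nbhd VH EH h \<union> {g' \<in> VG. EG g' g} \<times> VH"
  using assms by (auto simp: closed_nbhd_def lex_vertices_def lex_edges_def)

lemma card_colour_class_lex_closed_nbhd:
  assumes "finite VG" and "finite VH" and "\<not> EG g g" and "g \<in> VG" and "h \<in> VH"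
  shows "card {u \<in> closed_nbhd (lex_vertices VG VH) (lex_edges VG EG VH EH) (g, h). c (snd u) = i}
       = card {v \<in> closed_nbhd VH EH h. c v = i} + card {g' \<in> VG. EG g' g} * card {v \<in> VH. c v = i}"
proof -
  let ?fibre = "Pair g ` {v \<in> closed_nbhd VH EH h. c v = i}"
  let ?others = "{g' \<in> VG. EG g' g} \<times> {v \<in> VH. c v = i}"
  have split: "{u \<in> closed_nbhd (lex_vertices VG VH) (lex_edges VG EG VH EH) (g, h). c (snd u) = i}
                 = ?fibre \<union> ?others"
    using assms(4,5) by (auto simp: closed_nbhd_lex_edges)
  have "finite {v \<in> closed_nbhd VH EH h. c v = i}"
    using assms(2) by (simp add: closed_nbhd_def)
  moreover have "finite ?others"
    using assms(1,2) by simp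
  moreover have "?fibre \<inter> ?others = {}"
    using assms(3) by auto
  ultimately have "card (?fibre \<union> ?others) = card ?fibre + card ?others"
    by (simp add: card_Un_disjoint)
  also have "card ?fibre = card {v \<in> closed_nbhd VH EH h. c v = i}"
    by (rule card_image) (simp add: inj_on_def)
  also have "card ?others = card {g' \<in> VG. EG g' g} * card {v \<in> VH. c v = i}"
    by (rule card_cartesian_product)
  finally show ?thesis
    by (simp only: split)
qed

lemma cnb_coloring_lex_product:
  assumes "simple_graph VG EG" and "finite VH"
    and "cnb_coloring VH EH k c"
    and balanced_classes: "\<forall>i\<in>{1..k}. \<forall>j\<in>{1..k}. card {v \<in> VH. c v = i} = card {v \<in> VH. c v = j}"
  shows "cnb_coloring (lex_vertices VG VH) (lex_edges VG EG VH EH) k (c \<circ> snd)"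
  unfolding cnb_coloring_def
proof (intro conjI ballI)
  fix u assume "u \<in> lex_vertices VG VH"
  then show "(c \<circ> snd) u \<in> {1..k}"
    using assms(3) by (auto simp: lex_vertices_def cnb_coloring_def)
next
  fix u i j assume "u \<in> lex_vertices VG VH" and ij: "i \<in> {1..k}" "j \<in> {1..k}"
  then obtain g h where u: "u = (g, h)" and gh: "g \<in> VG" "h \<in> VH"
    by (auto simp: lex_vertices_def)
  have "finite VG" and "\<not> EG g g"
    using assms(1) unfolding simple_graph_def by blast+
  note count = card_colour_class_lex_closed_nbhd[where EG = EG and EH = EH and c = c, OF \<open>finite VG\<close> assms(2) \<open>\<not> EG g g\<close> gh]
  have "card {v \<in> closed_nbhd VH EH h. c v = i} = card {v \<in> closed_nbhd VH EH h. c v = j}"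
    using assms(3) gh(2) ij unfolding cnb_coloring_def by blast
  moreover have "card {v \<in> VH. c v = i} = card {v \<in> VH. c v = j}"
    using balanced_classes ij by blast
  ultimately
  show "card {w \<in> closed_nbhd (lex_vertices VG VH) (lex_edges VG EG VH EH) u. (c \<circ> snd) w = i}
      = card {w \<in> closed_nbhd (lex_vertices VG VH) (lex_edges VG EG VH EH) u. (c \<circ> snd) w = j}"
    unfolding u comp_apply count by (simp only:)
qed

theorem theorem2p20:
  fixes VG :: "'a set" and EG :: "'a \<Rightarrow> 'a \<Rightarrow> bool"
    and VH :: "'b set" and EH :: "'b \<Rightarrow> 'b \<Rightarrow> bool"
    and k :: nat and c :: "'b \<Rightarrow> nat"
  assumes "k \<ge> 2"
    and "simple_graph VG EG"
    and "simple_graph VH EH"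
    and "cnb_coloring VH EH k c"
    and "\<forall>i\<in>{1..k}. \<forall>j\<in>{1..k}. card {v \<in> VH. c v = i} = card {v \<in> VH. c v = j}"
  shows "\<exists>c'. cnb_coloring (lex_vertices VG VH) (lex_edges VG EG VH EH) k c'"
proof
  have "finite VH"
    using assms(3) unfolding simple_graph_def by blast
  then show "cnb_coloring (lex_vertices VG VH) (lex_edges VG EG VH EH) k (c \<circ> snd)"
    using cnb_coloring_lex_product assms(2,4,5) by blast
qed

end
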